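(* Let $P_{\mathbf{x}}$ be the uniform distribution on the unit ball $\mathcal{X}=\{\mathbf{x}\in\mathbb{R}^d:\|\mathbf{x}\|\le1\}$, hypotheses $\mathbf{x}\mapsto\mathrm{sign}(\langle\mathbf{w},\mathbf{x}\rangle)$ for unit vectors $\mathbf{w}$, and confidence function $g(\mathbf{w},\mathbf{x})=|\langle\mathbf{w},\mathbf{x}\rangle|$. Let the TBAL algorithm run for $k$ rounds, with $\hat{\mathbf{w}}_i,\hat t_i$ the ERM solution and auto-labeling margin threshold at round $i$, and let $\mathcal{X}^{(i)}$ be the unlabeled region at the beginning of round $i$. Then \[ \sum_{i=1}^k\mathbb{P}\big(\mathcal{X}^{(i)}(\hat{\mathbf{w}}_i,\hat t_i)\big)\ge1-\min_i\hat t_i\sqrt{4d/\pi}. \]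
   Context: $\mathcal{X}^{(i)}=\{\mathbf{x}\in\mathcal{X}:|\langle\hat{\mathbf{w}}_j,\mathbf{x}\rangle|<\hat t_j\ \forall j<i\}$ and, for a region $\mathcal{S}$, $\mathcal{S}(\mathbf{w},t)=\{\mathbf{x}\in\mathcal{S}:|\langle\mathbf{w},\mathbf{x}\rangle|\ge t\}$; $\mathbb{P}$ denotes probability mass under $P_{\mathbf{x}}$. In the TBAL algorithm, in each round $i$ a unit vector $\hat{\mathbf{w}}_i$ is obtained by empirical risk minimization on oracle-labeled data and a threshold $\hat t_i\in[0,1]$ is selected using validation data; points of the remaining region with $|\langle\hat{\mathbf{w}}_i,\mathbf{x}\rangle|\ge\hat t_i$ are auto-labeled and removed, so the regions $\mathcal{X}^{(i)}(\hat{\mathbf{w}}_i,\hat t_i)$ are the disjoint auto-labeled regions of the successive rounds. *)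

theory Defs
  imports "HOL-Analysis.Analysis"
begin

text \<open>Instance space: the closed unit ball of R^d (d = CARD('n)).\<close>
definition unit_ball :: "(real^'n) set" where
  "unit_ball = cball 0 1"

definition Px :: "(real^'n) measure" where
  "Px = uniform_measure lborel unit_ball"

definition margin_region :: "(real^'n) set \<Rightarrow> real^'n \<Rightarrow> real \<Rightarrow> (real^'n) set" where
  "margin_region S w t = {x \<in> S. \<bar>w \<bullet> x\<bar> \<ge> t}"

text \<open>X^(i) = {x in X. |<w_j,x>| < t_j for all 1 <= j < i} (rounds indexed from 1).\<close>
definition remaining_region :: "(nat \<Rightarrow> real^'n) \<Rightarrow> (nat \<Rightarrow> real) \<Rightarrow> nat \<Rightarrow> (real^'n) set" where
  "remaining_region w t i = {x \<in> unit_ball. \<forall>j\<in>{1..<i}. \<bar>w j \<bullet> x\<bar> < t j}"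

end

(* Every point of the unit ball is either auto-labeled in some round i <= k or satisfies
   |<w_j, x>| < t_j for all j <= k, in particular for the round m with the smallest threshold.
   So the auto-labeled mass is at least 1 minus the mass of the slab |<w_m, x>| < t_m.
   Rotating w_m onto a coordinate axis and integrating out that coordinate bounds the volume
   of the slab by 2 t_m vol(B^(d-1)), and log-convexity of Gamma gives
   2 vol(B^(d-1)) <= sqrt(4d/pi) vol(B^d). *)

theory Submission
  imports Defs
begin

(* The library proves rotation invariance of Lebesgue measure (measure_orthogonal_image) only
   for well-ordered index types; this ordered copy of a finite index type transfers it. *)
typedef ('a::finite) ranked = "UNIV :: 'a set" by simp

definition rank :: "'a::finite ranked \<Rightarrow> nat" where
  "rank x = to_nat_on UNIV (Rep_ranked x)"

lemma inj_rank: "inj rank"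
  unfolding rank_def inj_def
  by (metis Rep_ranked_inject countable_finite finite inj_on_to_nat_on injD)

instantiation ranked :: (finite) linorder
begin

definition less_eq_ranked :: "'a ranked \<Rightarrow> 'a ranked \<Rightarrow> bool" where
  "x \<le> y \<longleftrightarrow> rank x \<le> rank y"

definition less_ranked :: "'a ranked \<Rightarrow> 'a ranked \<Rightarrow> bool" where
  "x < y \<longleftrightarrow> rank x < rank y"

instance
  by standard (auto simp: less_eq_ranked_def less_ranked_def dest: injD[OF inj_rank])

end

instance ranked :: (finite) wellorder
proof (rule wf_wellorderI)
  show "wf {(x :: 'a ranked, y). x < y}"
    using wf_inv_image[OF wf_less, of rank] by (simp add: inv_image_def less_ranked_def)
qed intro_classes

instance ranked :: (finite) finite
proof
  have "UNIV = range (Abs_ranked :: 'a \<Rightarrow> 'a ranked)"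
    by (metis Rep_ranked_inverse surj_def)
  then show "finite (UNIV :: 'a ranked set)"
    by (metis finite finite_imageI)
qed

lemma measurable_linear_borel: "linear f \<Longrightarrow> f \<in> borel_measurable borel"
  for f :: "'a::euclidean_space \<Rightarrow> 'b::euclidean_space"
  by (intro borel_measurable_continuous_onI linear_continuous_on)
    (simp add: linear_conv_bounded_linear)

definition permute_coords :: "('b \<Rightarrow> 'a) \<Rightarrow> real^'a \<Rightarrow> real^'b" where
  "permute_coords h x = (\<chi> i. x $ h i)"

lemma linear_permute_coords: "linear (permute_coords h)"
  by (auto simp: linear_iff vec_eq_iff permute_coords_def)

lemma inner_permute_coords:
  assumes "bij h"
  shows "permute_coords h x \<bullet> permute_coords h y = x \<bullet> y"
  unfolding inner_vec_def permute_coords_def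
  using sum.reindex_bij_betw[OF assms, of "\<lambda>i. x $ i \<bullet> y $ i"] by simp

lemma measurable_permute_coords [measurable]: "permute_coords h \<in> borel_measurable borel"
  by (rule measurable_linear_borel[OF linear_permute_coords])

lemma prod_Basis_vec: "(\<Prod>b\<in>Basis. x \<bullet> b) = (\<Prod>i\<in>UNIV. x $ i)"
  for x :: "real^'n"
proof -
  have Basis: "(Basis :: (real^'n) set) = range (\<lambda>i. axis i 1)"
    by (auto simp: Basis_vec_def)
  have "inj (\<lambda>i::'n. axis i (1::real))"
    by (auto simp: inj_on_def axis_eq_axis)
  then show ?thesis
    unfolding Basis by (subst prod.reindex) (auto simp: inner_axis)
qed

lemma lborel_distr_permute_coords:
  fixes h :: "'b::finite \<Rightarrow> 'a::finite"
  assumes "bij h"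
  shows "distr lborel borel (permute_coords h) = (lborel :: (real^'b) measure)"
proof (rule lborel_eqI[symmetric])
  fix l u :: "real^'b"
  assume le: "\<And>b. b \<in> Basis \<Longrightarrow> l \<bullet> b \<le> u \<bullet> b"
  let ?g = "inv h"
  have "bij ?g"
    using assms by (rule bij_imp_bij_inv)
  have hg: "h (?g j) = j" for j
    using assms by (simp add: bij_is_surj surj_f_inv_f)
  have gh: "?g (h i) = i" for i
    using assms by (simp add: bij_is_inj)
  have vimage_box: "permute_coords h -` box l u = box (permute_coords ?g l) (permute_coords ?g u)"
    by (auto simp: mem_box_cart permute_coords_def) (metis hg, metis hg, metis gh, metis gh)
  have "l $ i \<le> u $ i" for i
    using le[of "axis i 1"] by (auto simp: Basis_vec_def cart_eq_inner_axis)
  then have "\<forall>b\<in>Basis. permute_coords ?g l \<bullet> b \<le> permute_coords ?g u \<bullet> b"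
    by (auto simp: Basis_vec_def inner_axis permute_coords_def)
  then have "emeasure (distr lborel borel (permute_coords h)) (box l u)
      = (\<Prod>i\<in>UNIV. (u - l) $ ?g i)"
    by (simp add: emeasure_distr vimage_box emeasure_lborel_box_eq prod_Basis_vec permute_coords_def)
  also have "\<dots> = (\<Prod>b\<in>Basis. (u - l) \<bullet> b)"
    using prod.reindex_bij_betw[OF \<open>bij ?g\<close>, of "\<lambda>i. (u - l) $ i"] by (simp add: prod_Basis_vec)
  finally show "emeasure (distr lborel borel (permute_coords h)) (box l u) = (\<Prod>b\<in>Basis. (u - l) \<bullet> b)" .
qed simp

lemma lborel_distr_orthogonal_transformation_wellorder:
  fixes f :: "real^'n::{finite,wellorder} \<Rightarrow> real^'n::_"
  assumes f: "orthogonal_transformation f"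
  shows "distr lborel borel f = lborel"
proof (rule lborel_eqI[symmetric])
  have f_meas: "f \<in> borel_measurable borel"
    using f by (intro measurable_linear_borel orthogonal_transformation_linear)
  fix l u :: "(real, 'n) vec"
  assume le: "\<And>b. b \<in> Basis \<Longrightarrow> l \<bullet> b \<le> u \<bullet> b"
  have vimage_box: "f -` box l u = inv f ` box l u"
    using orthogonal_transformation_bij[OF f] by (rule bij_vimage_eq_inv_image)
  have "f -` box l u \<in> sets borel"
    using measurable_sets_borel[OF f_meas, of "box l u"] by simp
  then have "emeasure (distr lborel borel f) (box l u) = emeasure lebesgue (inv f ` box l u)"
    using f_meas by (simp add: emeasure_distr flip: vimage_box)
  also have "\<dots> = measure lebesgue (inv f ` box l u)"
    using orthogonal_transformation_inv[OF f]
    by (intro emeasure_eq_measure2 measurable_orthogonal_image) auto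
  also have "\<dots> = measure lebesgue (box l u)"
    using orthogonal_transformation_inv[OF f] by (simp add: measure_orthogonal_image)
  also have "\<dots> = emeasure lborel (box l u)"
    by (simp add: emeasure_eq_measure2)
  finally show "emeasure (distr lborel borel f) (box l u) = (\<Prod>b\<in>Basis. (u - l) \<bullet> b)"
    using le by (simp add: emeasure_lborel_box_eq)
qed simp

lemma lborel_distr_orthogonal_transformation:
  fixes f :: "real^'n::finite \<Rightarrow> real^'n"
  assumes f: "orthogonal_transformation f"
  shows "distr lborel borel f = lborel"
proof -
  let ?\<phi> = "permute_coords (Rep_ranked :: 'n ranked \<Rightarrow> 'n)"
  let ?\<psi> = "permute_coords (Abs_ranked :: 'n \<Rightarrow> 'n ranked)"
  have bij_Rep: "bij (Rep_ranked :: 'n ranked \<Rightarrow> 'n)"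
    by (rule bij_betwI[where g = Abs_ranked]) (auto simp: Abs_ranked_inverse Rep_ranked_inverse)
  have bij_Abs: "bij (Abs_ranked :: 'n \<Rightarrow> 'n ranked)"
    by (rule bij_betwI[where g = Rep_ranked]) (auto simp: Abs_ranked_inverse Rep_ranked_inverse)
  have \<psi>_\<phi>: "?\<psi> (?\<phi> x) = x" for x
    by (simp add: permute_coords_def vec_eq_iff Abs_ranked_inverse)
  have \<phi>_\<psi>: "?\<phi> (?\<psi> y) = y" for y
    by (simp add: permute_coords_def vec_eq_iff Rep_ranked_inverse)
  define g where "g = ?\<phi> \<circ> f \<circ> ?\<psi>"
  have "linear g"
    unfolding g_def using orthogonal_transformation_linear[OF f]
    by (intro linear_compose linear_permute_coords)
  then have "orthogonal_transformation g"
    using f by (simp add: orthogonal_transformation_def g_def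
        inner_permute_coords[OF bij_Rep] inner_permute_coords[OF bij_Abs])
  then have [measurable]: "g \<in> borel_measurable borel"
    by (intro measurable_linear_borel orthogonal_transformation_linear)
  have "f = ?\<psi> \<circ> g \<circ> ?\<phi>"
    by (simp add: g_def fun_eq_iff \<psi>_\<phi> \<phi>_\<psi>)
  then have "distr lborel borel f = distr (distr (distr lborel borel ?\<phi>) borel g) borel ?\<psi>"
    by (simp add: distr_distr comp_assoc)
  also have "\<dots> = lborel"
    using \<open>orthogonal_transformation g\<close>
    by (simp add: lborel_distr_permute_coords bij_Rep bij_Abs
        lborel_distr_orthogonal_transformation_wellorder)
  finally show ?thesis .
qed

lemma measure_lborel_orthogonal_vimage:
  fixes f :: "real^'n::finite \<Rightarrow> real^'n"
  assumes f: "orthogonal_transformation f" and S: "S \<in> sets borel"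
  shows "measure lborel (f -` S) = measure lborel S"
proof -
  have "f \<in> borel_measurable borel"
    using f by (intro measurable_linear_borel orthogonal_transformation_linear)
  then have "measure lborel (f -` S) = measure (distr lborel borel f) S"
    using S by (simp add: measure_distr)
  then show ?thesis
    by (simp add: lborel_distr_orthogonal_transformation[OF f])
qed

lemma emeasure_PiM_cylinder:
  fixes A :: "'i set" and t :: real
  assumes A: "finite A" "e \<notin> A" and t: "0 \<le> t"
  shows "emeasure (Pi\<^sub>M (insert e A) (\<lambda>_. lborel))
      ({f. \<bar>f e\<bar> < t \<and> sqrt (\<Sum>b\<in>A. (f b)\<^sup>2) \<le> 1} \<inter> space (Pi\<^sub>M (insert e A) (\<lambda>_. lborel)))
    = ennreal (2 * t * unit_ball_vol (real (card A)))"
    (is "emeasure ?M (?C \<inter> space ?M) = _")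
proof -
  interpret product_sigma_finite "\<lambda>_::'i. (lborel::real measure)"
    by standard
  let ?N = "Pi\<^sub>M A (\<lambda>_. lborel)"
  let ?B = "{f. sqrt (\<Sum>b\<in>A. (f b)\<^sup>2) \<le> 1} \<inter> space ?N"
  have "emeasure ?M (?C \<inter> space ?M) = (\<integral>\<^sup>+ f. indicator (?C \<inter> space ?M) f \<partial>?M)"
    by (subst nn_integral_indicator) auto
  also have "\<dots> = (\<integral>\<^sup>+ y. \<integral>\<^sup>+ x. indicator (?C \<inter> space ?M) (x(e := y)) \<partial>?N \<partial>lborel)"
    using A by (subst product_nn_integral_insert_rev) auto
  also have "\<dots> = (\<integral>\<^sup>+ y. \<integral>\<^sup>+ x. indicator {-t<..<t} y * indicator ?B x \<partial>?N \<partial>lborel)"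
  proof (intro nn_integral_cong)
    fix y :: real and x :: "'i \<Rightarrow> real"
    assume "x \<in> space ?N"
    moreover have "(\<Sum>b\<in>A. (if b = e then y else x b)\<^sup>2) = (\<Sum>b\<in>A. (x b)\<^sup>2)"
      using A by (intro sum.cong) auto
    ultimately show "indicator (?C \<inter> space ?M) (x(e := y))
        = (indicator {-t<..<t} y * indicator ?B x :: ennreal)"
      using A by (auto simp: indicator_def PiE_def space_PiM abs_less_iff extensional_def)
  qed
  also have "\<dots> = (\<integral>\<^sup>+ y. indicator {-t<..<t} y * (\<integral>\<^sup>+ x. indicator ?B x \<partial>?N) \<partial>lborel)"
    by (subst nn_integral_cmult) auto
  also have "\<dots> = (\<integral>\<^sup>+ y. indicator {-t<..<t} y * emeasure ?N ?B \<partial>lborel)"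
  proof -
    have "?B \<in> sets ?N"
      by measurable
    then show ?thesis
      by (simp only: nn_integral_indicator)
  qed
  also have "\<dots> = ennreal (unit_ball_vol (real (card A))) * emeasure lborel {-t<..<t}"
    using emeasure_cball_aux[OF A(1), of 1]
    by (subst nn_integral_cmult_indicator[symmetric]) (auto simp: mult.commute)
  also have "\<dots> = ennreal (2 * t * unit_ball_vol (real (card A)))"
    using t by (simp add: ennreal_mult'[symmetric] mult.commute)
  finally show ?thesis .
qed

lemma emeasure_slab_Basis_le:
  fixes e :: "'a::euclidean_space" and t :: real
  assumes e: "e \<in> Basis" and t: "0 \<le> t"
  shows "emeasure lborel {x::'a. norm x \<le> 1 \<and> \<bar>x \<bullet> e\<bar> < t}
    \<le> ennreal (2 * t * unit_ball_vol (real (DIM('a) - 1)))"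
proof -
  define A where "A = (Basis::'a set) - {e}"
  have Basis: "Basis = insert e A" and A: "finite A" "e \<notin> A"
    using e by (auto simp: A_def)
  have card_A: "card A = DIM('a) - 1"
    using e by (simp add: A_def card_Diff_singleton)
  let ?M = "Pi\<^sub>M (insert e A) (\<lambda>_. lborel::real measure)"
  let ?F = "\<lambda>f. \<Sum>b\<in>insert e A. f b *\<^sub>R b :: 'a"
  let ?S = "{x::'a. norm x \<le> 1 \<and> \<bar>x \<bullet> e\<bar> < t}"
  have "?F \<in> ?M \<rightarrow>\<^sub>M borel"
    by measurable
  moreover have "?S \<in> sets borel"
    by measurable
  ultimately have "emeasure lborel ?S = emeasure ?M (?F -` ?S \<inter> space ?M)"
    by (subst lborel_eq) (simp add: Basis emeasure_distr)
  also have "\<dots> \<le> emeasure ?M ({f. \<bar>f e\<bar> < t \<and> sqrt (\<Sum>b\<in>A. (f b)\<^sup>2) \<le> 1} \<inter> space ?M)"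
  proof (rule emeasure_mono)
    have "\<bar>f e\<bar> < t \<and> sqrt (\<Sum>b\<in>A. (f b)\<^sup>2) \<le> 1" if "?F f \<in> ?S" for f
    proof
      have coord: "?F f \<bullet> b = f b" if "b \<in> insert e A" for b
        using that by (simp add: inner_sum_left inner_Basis Basis[symmetric] if_distrib cong: if_cong)
      show "\<bar>f e\<bar> < t"
        using \<open>?F f \<in> ?S\<close> coord[of e] by simp
      have "(f e)\<^sup>2 + (\<Sum>b\<in>A. (f b)\<^sup>2) = (\<Sum>b\<in>insert e A. f b * f b)"
        using A by (simp add: power2_eq_square)
      also have "\<dots> = ?F f \<bullet> ?F f"
        by (simp add: inner_sum_right coord)
      also have "\<dots> = norm (?F f) ^ 2"
        by (simp add: power2_norm_eq_inner)
      also have "\<dots> \<le> 1"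
        using \<open>?F f \<in> ?S\<close> by (simp add: power_le_one)
      finally show "sqrt (\<Sum>b\<in>A. (f b)\<^sup>2) \<le> 1"
        by (smt (verit) real_sqrt_le_1_iff zero_le_power2)
    qed
    then show "?F -` ?S \<inter> space ?M \<subseteq> {f. \<bar>f e\<bar> < t \<and> sqrt (\<Sum>b\<in>A. (f b)\<^sup>2) \<le> 1} \<inter> space ?M"
      by blast
  qed measurable
  also have "\<dots> = ennreal (2 * t * unit_ball_vol (real (DIM('a) - 1)))"
    unfolding card_A[symmetric] by (rule emeasure_PiM_cylinder[OF A t])
  finally show ?thesis .
qed

lemma measure_slab_le:
  fixes w :: "real^'n" and t :: real
  assumes w: "norm w = 1" and t: "0 \<le> t"
  shows "measure lborel {x. norm x \<le> 1 \<and> \<bar>w \<bullet> x\<bar> < t}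
    \<le> 2 * t * unit_ball_vol (real (CARD('n) - 1))"
proof -
  fix k :: 'n
  obtain f :: "real^'n \<Rightarrow> real^'n" where f: "orthogonal_transformation f" and f_axis: "f (axis k 1) = w"
    using orthogonal_transformation_exists_1[OF norm_axis_1 w] by blast
  let ?S = "{x. norm x \<le> 1 \<and> \<bar>w \<bullet> x\<bar> < t}"
  have "w \<bullet> f y = y \<bullet> axis k 1" for y
    using f unfolding orthogonal_transformation_def f_axis[symmetric] by (simp add: inner_commute)
  then have vimage_S: "f -` ?S = {y. norm y \<le> 1 \<and> \<bar>y \<bullet> axis k (1::real)\<bar> < t}"
    using orthogonal_transformation_norm[OF f] by auto
  have "?S \<in> sets borel"
    by measurable
  then have "measure lborel ?S = measure lborel (f -` ?S)"
    by (rule measure_lborel_orthogonal_vimage[OF f, symmetric])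
  also have "\<dots> = measure lborel {y. norm y \<le> 1 \<and> \<bar>y \<bullet> axis k (1::real)\<bar> < t}"
    unfolding vimage_S ..
  also have "\<dots> \<le> 2 * t * unit_ball_vol (real (CARD('n) - 1))"
    using emeasure_slab_Basis_le[of "axis k (1::real)" t] t
    unfolding measure_def by (intro enn2real_leI) auto
  finally show ?thesis .
qed

lemma Gamma_half_succ_le:
  fixes d :: real
  assumes d: "1 \<le> d"
  shows "Gamma (d / 2 + 1) \<le> sqrt d * Gamma ((d + 1) / 2)"
proof -
  define a where "a = (d + 1) / 2"
  have a: "0 < a" "a \<le> d"
    using d by (auto simp: a_def)
  have Gamma_a: "0 < Gamma a"
    using a by simp
  have midpoint: "(1 - 1/2) *\<^sub>R a + (1/2) *\<^sub>R (a + 1) = d / 2 + 1"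
    by (simp add: a_def field_simps)
  have "ln (Gamma (d / 2 + 1)) \<le> (1 - 1/2) * ln (Gamma a) + (1/2) * ln (Gamma (a + 1))"
    using convex_onD[OF log_convex_Gamma_real, of "1/2" a "a + 1", unfolded midpoint] a by simp
  also have "Gamma (a + 1) = a * Gamma a"
    using a by (intro Gamma_plus1) auto
  also have "(1 - 1/2) * ln (Gamma a) + (1/2) * ln (a * Gamma a) = ln (Gamma a * sqrt a)"
    using a Gamma_a by (simp add: ln_mult_pos ln_sqrt field_simps)
  finally have "Gamma (d / 2 + 1) \<le> Gamma a * sqrt a"
    using a Gamma_a d by (subst (asm) ln_le_cancel_iff) auto
  also have "\<dots> \<le> Gamma a * sqrt d"
    using a Gamma_a by (intro mult_left_mono) auto
  finally show ?thesis
    by (simp add: a_def mult.commute)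
qed

lemma unit_ball_vol_pred_le:
  fixes d :: real
  assumes d: "1 \<le> d"
  shows "2 * unit_ball_vol (d - 1) \<le> sqrt (4 * d / pi) * unit_ball_vol d"
proof -
  define G1 where "G1 = Gamma ((d + 1) / 2)"
  define G2 where "G2 = Gamma (d / 2 + 1)"
  have "0 < G1" "0 < G2"
    using d by (auto simp: G1_def G2_def)
  have "G2 \<le> sqrt d * G1"
    unfolding G1_def G2_def using d by (rule Gamma_half_succ_le)
  have "0 < sqrt d"
    using d by simp
  have "2 * unit_ball_vol (d - 1) = 2 * (pi powr (d / 2) / sqrt pi) / G1"
    by (simp add: unit_ball_vol_def G1_def powr_diff powr_half_sqrt diff_divide_distrib
        add_divide_distrib add.commute)
  also have "\<dots> = (2 * sqrt d / sqrt pi * pi powr (d / 2)) / (sqrt d * G1)"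
    using \<open>0 < sqrt d\<close> by (simp add: field_simps)
  also have "\<dots> \<le> (2 * sqrt d / sqrt pi * pi powr (d / 2)) / G2"
    using \<open>0 < G1\<close> \<open>0 < G2\<close> \<open>G2 \<le> sqrt d * G1\<close> \<open>0 < sqrt d\<close>
    by (intro divide_left_mono) auto
  also have "\<dots> = sqrt (4 * d / pi) * unit_ball_vol d"
    by (simp add: unit_ball_vol_def G2_def real_sqrt_mult real_sqrt_divide)
  finally show ?thesis .
qed

lemma unit_ball_vol_neq_0 [simp]: "0 \<le> n \<Longrightarrow> unit_ball_vol n \<noteq> 0"
  using unit_ball_vol_pos[of n] by linarith

lemma sets_Px [simp]: "sets Px = sets borel"
  by (simp add: Px_def)

lemma unit_ball_sets [measurable]: "unit_ball \<in> sets borel"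
  by (simp add: unit_ball_def)

lemma emeasure_unit_ball:
  "emeasure lborel (unit_ball :: (real^'n) set) = ennreal (unit_ball_vol (real CARD('n)))"
  using emeasure_cball[of 1 "0 :: real^'n"] by (simp add: unit_ball_def)

lemma measure_unit_ball: "measure lborel (unit_ball :: (real^'n) set) = unit_ball_vol (real CARD('n))"
  by (simp add: measure_def emeasure_unit_ball)

lemma measure_Px:
  assumes "B \<in> sets borel"
  shows "measure (Px :: (real^'n) measure) B
    = measure lborel (unit_ball \<inter> B) / unit_ball_vol (real CARD('n))"
  unfolding Px_def measure_unit_ball[symmetric]
  using assms emeasure_unit_ball[where 'n = 'n] by (intro measure_uniform_measure) auto

lemma measure_Px_unit_ball: "measure (Px :: (real^'n) measure) unit_ball = 1"
  by (simp add: measure_Px measure_unit_ball)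

lemma finite_measure_Px: "finite_measure (Px :: (real^'n) measure)"
  unfolding Px_def using emeasure_unit_ball[where 'n = 'n]
  by (intro finite_measureI) (simp add: divide_ennreal)

lemma measure_Px_slab_le:
  fixes w :: "real^'n" and t :: real
  assumes w: "norm w = 1" and t: "0 \<le> t"
  shows "measure Px {x \<in> unit_ball. \<bar>w \<bullet> x\<bar> < t} \<le> t * sqrt (4 * real CARD('n) / pi)"
proof -
  let ?V = "unit_ball_vol (real CARD('n))"
  have "0 < ?V"
    by simp
  have "unit_ball \<inter> {x \<in> unit_ball. \<bar>w \<bullet> x\<bar> < t} = {x. norm x \<le> 1 \<and> \<bar>w \<bullet> x\<bar> < t}"
    by (auto simp: unit_ball_def)
  moreover have "{x \<in> unit_ball. \<bar>w \<bullet> x\<bar> < t} \<in> sets borel"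
    by measurable
  ultimately have "measure Px {x \<in> unit_ball. \<bar>w \<bullet> x\<bar> < t}
      = measure lborel {x. norm x \<le> 1 \<and> \<bar>w \<bullet> x\<bar> < t} / ?V"
    by (simp add: measure_Px)
  also have "\<dots> \<le> 2 * t * unit_ball_vol (real CARD('n) - 1) / ?V"
    using measure_slab_le[OF w t] \<open>0 < ?V\<close> by (intro divide_right_mono) auto
  also have "\<dots> \<le> t * (sqrt (4 * real CARD('n) / pi) * ?V) / ?V"
    using mult_left_mono[OF unit_ball_vol_pred_le[of "real CARD('n)"] t] \<open>0 < ?V\<close>
    by (intro divide_right_mono) (auto simp: mult_ac)
  also have "\<dots> = t * sqrt (4 * real CARD('n) / pi)"
    using \<open>0 < ?V\<close> by simp
  finally show ?thesis .
qed

lemma remaining_region_sets [measurable]: "remaining_region w t i \<in> sets borel"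
  unfolding remaining_region_def unit_ball_def by measurable

lemma margin_region_sets [measurable]:
  assumes "S \<in> sets borel"
  shows "margin_region S w t \<in> sets borel"
proof -
  have "margin_region S w t = S \<inter> {x. t \<le> \<bar>w \<bullet> x\<bar>}"
    by (auto simp: margin_region_def)
  moreover have "{x. t \<le> \<bar>w \<bullet> x\<bar>} \<in> sets borel"
    by measurable
  ultimately show ?thesis
    using assms by simp
qed

lemma remaining_region_Suc:
  assumes "1 \<le> i"
  shows "remaining_region w t (Suc i) = {x \<in> remaining_region w t i. \<bar>w i \<bullet> x\<bar> < t i}"
  using assms by (auto simp: remaining_region_def less_Suc_eq)

lemma remaining_region_subset_slab:
  assumes "j \<in> {1..<i}"
  shows "remaining_region w t i \<subseteq> {x \<in> unit_ball. \<bar>w j \<bullet> x\<bar> < t j}"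
  using assms by (auto simp: remaining_region_def)

lemma unit_ball_subset_margin_regions_Un_remaining:
  fixes w :: "nat \<Rightarrow> real^'n" and t :: "nat \<Rightarrow> real"
  shows "unit_ball \<subseteq> (\<Union>i\<in>{1..k}. margin_region (remaining_region w t i) (w i) (t i))
    \<union> remaining_region w t (Suc k)"
proof (induction k)
  case 0
  then show ?case
    by (simp add: remaining_region_def)
next
  case (Suc k)
  have "remaining_region w t (Suc k)
      \<subseteq> margin_region (remaining_region w t (Suc k)) (w (Suc k)) (t (Suc k))
        \<union> remaining_region w t (Suc (Suc k))"
    by (auto simp: margin_region_def remaining_region_Suc[of "Suc k"])
  with Suc.IH show ?case
    by (auto simp: atLeastAtMostSuc_conv)
qed

theorem lemma8:
  fixes w :: "nat \<Rightarrow> real^'n" and t :: "nat \<Rightarrow> real" and k :: nat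
  assumes "k \<ge> 1"
    and "\<forall>i\<in>{1..k}. norm (w i) = 1"
    and "\<forall>i\<in>{1..k}. 0 \<le> t i \<and> t i \<le> 1"
  shows "(\<Sum>i=1..k. measure Px (margin_region (remaining_region w t i) (w i) (t i)))
           \<ge> 1 - Min (t ` {1..k}) * sqrt (4 * real CARD('n) / pi)"
proof -
  interpret Px: finite_measure "Px :: (real^'n) measure"
    by (rule finite_measure_Px)
  have "Min (t ` {1..k}) \<in> t ` {1..k}"
    using \<open>k \<ge> 1\<close> by (intro Min_in) auto
  then obtain m where m: "m \<in> {1..k}" "t m = Min (t ` {1..k})"
    by auto
  let ?M = "\<lambda>i. margin_region (remaining_region w t i) (w i) (t i)"
  have "1 = measure Px (unit_ball :: (real^'n) set)"
    by (simp add: measure_Px_unit_ball)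
  also have "\<dots> \<le> measure Px ((\<Union>i\<in>{1..k}. ?M i) \<union> remaining_region w t (Suc k))"
    by (intro Px.finite_measure_mono unit_ball_subset_margin_regions_Un_remaining) auto
  also have "\<dots> \<le> (\<Sum>i=1..k. measure Px (?M i)) + measure Px (remaining_region w t (Suc k))"
    by (intro order.trans[OF measure_Un_le] add_mono measure_UNION_le) auto
  also have "\<dots> \<le> (\<Sum>i=1..k. measure Px (?M i)) + measure Px {x \<in> unit_ball. \<bar>w m \<bullet> x\<bar> < t m}"
    using m(1) by (intro add_left_mono Px.finite_measure_mono remaining_region_subset_slab) auto
  also have "\<dots> \<le> (\<Sum>i=1..k. measure Px (?M i)) + t m * sqrt (4 * real CARD('n) / pi)"
    using m(1) assms(2,3) by (intro add_left_mono measure_Px_slab_le) auto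
  finally show ?thesis
    using m(2) by simp
qed

end
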